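(* For every integer $r\ge0$, $$B_{r+1}=\sum_{k=0}^r(-1)^k\binom rk\frac{B_{r-k}B_{k+1}}{k+1}.$$
   Context: Bernoulli numbers $B_n$ are defined by $\frac{t}{e^t-1}=\sum_{n\ge0}B_nt^n/n!$ (so $B_0=1$, $B_1=-\tfrac12$). *)

theory Defs
  imports "HOL-Computational_Algebra.Formal_Power_Series"
begin

definition bernoulli :: "nat \<Rightarrow> real" where
  "bernoulli n = fact n * fps_nth (fps_X / (fps_exp 1 - 1)) n"

end

theory Submission
  imports Defs
begin

(* Let B(t) = t/(e^t - 1) be the exponential generating function of the Bernoulli
   numbers and E(t) = e^t - 1, so that B * E = t.  The identity is the coefficient
   form of the differential equation

       B'(t) = B(t) * F(t),   where   t * F(t) = 1 - B(-t),

   i.e. F(t) = sum_k (-1)^k B_(k+1)/(k+1)! t^k.  It follows from two facts about B: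
   the reflection law B(-t) = B(t) + t (B_1 = -1/2 is the only odd Bernoulli number),
   and t * B'(t) = B(t) * (1 - B(-t)), obtained by differentiating B * E = t and
   cancelling E. *)

unbundle fps_syntax

lemma one_minus_compose_neg_X:
  fixes f :: "'a::comm_ring_1 fps"
  assumes "f $ 0 = 1"
  shows "1 - (f oo - fps_X) = fps_X * Abs_fps (\<lambda>k. (-1) ^ k * f $ (k + 1))"
proof (rule fps_ext)
  fix n
  show "(1 - (f oo - fps_X)) $ n = (fps_X * Abs_fps (\<lambda>k. (-1) ^ k * f $ (k + 1))) $ n"
    using assms by (cases n) (simp_all add: fps_compose_uminus')
qed

definition bernoulli_fps :: "real fps" where
  "bernoulli_fps = fps_X / (fps_exp 1 - 1)"

lemma bernoulli_eq_fps_nth: "bernoulli n = fact n * bernoulli_fps $ n"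
  by (simp add: bernoulli_def bernoulli_fps_def)

lemma exp_minus_one_subdegree: "subdegree (fps_exp (1::real) - 1) = 1"
  by (rule subdegreeI) auto

lemma exp_minus_one_nonzero: "fps_exp (1::real) - 1 \<noteq> 0"
  using exp_minus_one_subdegree by (metis subdegree_0 zero_neq_one)

text \<open>Since e^t - 1 has order exactly 1, the quotient defining B is exact: B * (e^t - 1) = t.\<close>
lemma bernoulli_fps_times_denom: "bernoulli_fps * (fps_exp 1 - 1) = fps_X"
proof -
  have "fps_exp 1 - 1 dvd (fps_X :: real fps)"
    using fps_dvd_iff[OF exp_minus_one_nonzero] exp_minus_one_subdegree by simp
  then show ?thesis by (simp add: bernoulli_fps_def)
qed

lemma bernoulli_fps_nth_0: "bernoulli_fps $ 0 = 1"
proof -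
  have "(bernoulli_fps * (fps_exp 1 - 1)) $ 1 = 1"
    by (simp add: bernoulli_fps_times_denom)
  then show ?thesis by (simp add: fps_mult_nth)
qed

text \<open>Reflection law B(-t) = B(t) + t.  Both sides times e^(-t) - 1 give -t: for the
  left side by substituting -t into B * E = t, for the right side after multiplying by e^t.\<close>
lemma bernoulli_fps_reflect: "bernoulli_fps oo - fps_X = bernoulli_fps + fps_X"
proof -
  define B E P where "B = bernoulli_fps" and "E = fps_exp (1::real) - 1" and "P = fps_exp (1::real)"
  define E' where "E' = fps_exp (-1::real) - 1"
  have BE: "B * E = fps_X"
    by (simp add: B_def E_def bernoulli_fps_times_denom)
  have E'_eq: "E oo - fps_X = E'"
    by (simp add: E_def E'_def fps_compose_sub_distrib)
  have E'_nonzero: "E' \<noteq> 0"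
  proof
    assume "E' = 0"
    then have "E' $ 1 = 0" by simp
    then show False by (simp add: E'_def)
  qed
  have P_nonzero: "P \<noteq> 0"
  proof
    assume "P = 0"
    then have "P $ 0 = 0" by simp
    then show False by (simp add: P_def)
  qed
  have exp_inverse: "fps_exp (-1) * P = 1"
    by (simp add: P_def flip: fps_exp_add_mult)
  have lhs: "(B oo - fps_X) * E' = - fps_X"
    using BE by (simp flip: E'_eq fps_compose_mult_distrib)
  have "(B + fps_X) * E' * P = (B + fps_X) * (fps_exp (-1) * P - P)"
    by (simp add: E'_def algebra_simps)
  also have "\<dots> = (B + fps_X) * (1 - P)"
    by (simp only: exp_inverse)
  also have "\<dots> = - (B * E) - fps_X * E"
    by (simp add: E_def P_def algebra_simps)
  also have "\<dots> = - fps_X * P"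
    unfolding BE by (simp add: E_def P_def algebra_simps)
  finally have rhs: "(B + fps_X) * E' = - fps_X"
    using P_nonzero by (metis mult_right_cancel mult_minus_left)
  from lhs rhs have "(B oo - fps_X) * E' = (B + fps_X) * E'"
    by simp
  with E'_nonzero show ?thesis
    by (simp add: B_def)
qed

text \<open>Differentiating B * E = t, where E = e^t - 1 has derivative E + 1, gives
  B' E + B (E + 1) = 1; multiplying by t and using the reflection law then shows
  t B' = B (1 - B(-t)) after cancelling E.\<close>
lemma bernoulli_fps_deriv_equation:
  "fps_X * fps_deriv bernoulli_fps = bernoulli_fps * (1 - (bernoulli_fps oo - fps_X))"
proof -
  define B E where "B = bernoulli_fps" and "E = fps_exp (1::real) - 1"
  have BE: "B * E = fps_X"
    by (simp add: B_def E_def bernoulli_fps_times_denom)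
  have deriv: "fps_deriv B * E + B * (E + 1) = 1"
  proof -
    have "fps_deriv (B * E) = 1" by (simp add: BE)
    then show ?thesis by (simp add: E_def algebra_simps)
  qed
  have "fps_X * fps_deriv B * E = fps_X - fps_X * fps_X - fps_X * B"
  proof -
    have "fps_X * fps_deriv B * E = fps_X - fps_X * (B * E) - fps_X * B"
      using arg_cong[OF deriv, of "\<lambda>g. fps_X * g"] by (simp add: algebra_simps)
    then show ?thesis by (simp only: BE)
  qed
  also have "\<dots> = B * E - B * (B * E) - fps_X * (B * E)"
    by (simp only: BE) (simp add: algebra_simps)
  also have "\<dots> = B * (1 - (B oo - fps_X)) * E"
    by (simp add: B_def bernoulli_fps_reflect algebra_simps)
  finally show ?thesis
    using exp_minus_one_nonzero by (simp add: B_def E_def)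
qed

lemma bernoulli_fps_deriv:
  "fps_deriv bernoulli_fps =
     bernoulli_fps * Abs_fps (\<lambda>k. (-1) ^ k * bernoulli_fps $ (k + 1))"
  using bernoulli_fps_deriv_equation
  by (simp add: one_minus_compose_neg_X bernoulli_fps_nth_0 mult.left_commute)

lemma bernoulli_fps_coeff_identity:
  fixes r :: nat
  shows "of_nat (r + 1) * bernoulli_fps $ (r + 1) =
     (\<Sum>k=0..r. (-1) ^ k * bernoulli_fps $ (r - k) * bernoulli_fps $ (k + 1))"
proof -
  have "of_nat (r + 1) * bernoulli_fps $ (r + 1) = fps_deriv bernoulli_fps $ r"
    by (simp add: algebra_simps)
  also have "\<dots> = (\<Sum>k=0..r. (-1) ^ k * bernoulli_fps $ (k + 1) * bernoulli_fps $ (r - k))"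
    unfolding bernoulli_fps_deriv mult.commute[of bernoulli_fps] fps_mult_nth by simp
  finally show ?thesis by (simp add: mult_ac add.commute)
qed

text \<open>Conversion of one summand from the b_n to the Bernoulli numbers, via
  binom(r,k) (r-k)! k! = r! and (k+1)! = (k+1) k!.\<close>
lemma bernoulli_summand:
  assumes "k \<le> r"
  shows "(-1) ^ k * of_nat (r choose k) *
           (bernoulli (r - k) * bernoulli (k + 1) / of_nat (k + 1))
         = fact r * ((-1) ^ k * bernoulli_fps $ (r - k) * bernoulli_fps $ (k + 1))"
proof -
  have binom: "of_nat (r choose k) * fact (r - k) * fact k = (fact r :: real)"
    using assms by (simp add: binomial_fact)
  have "(fact (k + 1) :: real) = of_nat (k + 1) * fact k"
    by simp
  then have "(-1) ^ k * of_nat (r choose k) *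
               (bernoulli (r - k) * bernoulli (k + 1) / of_nat (k + 1))
           = (-1) ^ k * (of_nat (r choose k) * fact (r - k) * fact k) *
               (bernoulli_fps $ (r - k) * bernoulli_fps $ (k + 1))"
    unfolding bernoulli_eq_fps_nth by (simp add: mult_ac)
  then show ?thesis
    unfolding binom by (simp add: mult_ac)
qed

theorem mainTheorem18:
  fixes r :: nat
  shows "bernoulli (r + 1) =
    (\<Sum>k=0..r. (-1) ^ k * of_nat (r choose k) *
        (bernoulli (r - k) * bernoulli (k + 1) / of_nat (k + 1)))"
proof -
  have "bernoulli (r + 1) = fact r * (of_nat (r + 1) * bernoulli_fps $ (r + 1))"
    by (simp add: bernoulli_eq_fps_nth algebra_simps)
  also have "\<dots> = (\<Sum>k=0..r. fact r * ((-1) ^ k * bernoulli_fps $ (r - k) * bernoulli_fps $ (k + 1)))"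
    by (simp only: bernoulli_fps_coeff_identity sum_distrib_left)
  also have "\<dots> = (\<Sum>k=0..r. (-1) ^ k * of_nat (r choose k) *
        (bernoulli (r - k) * bernoulli (k + 1) / of_nat (k + 1)))"
    by (rule sum.cong[OF refl], rule bernoulli_summand[symmetric]) simp
  finally show ?thesis .
qed

end
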